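(* For every nonnegative integer $n$, \[ \frac{(-1)^{n+1}}{n!}\,\mathrm{Ls}_{n+1}\!\left(\frac{\pi}{3}\right) \;=\; {}_{n+2}F_{n+1}\!\left(\begin{matrix}\frac12,\ldots,\frac12\\ \frac32,\ldots,\frac32\end{matrix};\,\frac14\right) \;=\; \sum_{k=0}^\infty \frac{2^{-4k}}{(2k+1)^{n+1}}\binom{2k}{k}, \] where the hypergeometric function has $n+2$ upper parameters all equal to $\frac12$ and $n+1$ lower parameters all equal to $\frac32$. Consequently, for complex $s$ with $|s|<1$, \[ -\sum_{n=0}^\infty \mathrm{Ls}_{n+1}\!\left(\frac{\pi}{3}\right)\frac{s^n}{n!} \;=\; \frac{1}{s+1}\,{}_2F_1\!\left(\begin{matrix}\frac12,\ \frac{s}{2}+\frac12\\ \frac{s}{2}+\frac32\end{matrix};\,\frac14\right) \;=\; \sum_{k=0}^\infty \frac{2^{-4k}}{2k+1+s}\binom{2k}{k}. \]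
   Context: For integers $n\ge 1$ and real $\sigma$, the log-sine integral is $\mathrm{Ls}_n(\sigma) := -\int_0^{\sigma}\log^{n-1}\left|2\sin\frac{\theta}{2}\right|\,\mathrm{d}\theta$. ${}_pF_q$ denotes the generalized hypergeometric series $\sum_{k\ge0}\frac{(a_1)_k\cdots(a_p)_k}{(b_1)_k\cdots(b_q)_k}\frac{z^k}{k!}$ with Pochhammer symbols $(a)_k$. *)

theory Defs
  imports "HOL-Analysis.Analysis"
begin

definition Ls :: "nat \<Rightarrow> real \<Rightarrow> real" where
  "Ls n \<sigma> = - (LBINT \<theta>=0..\<sigma>. (ln \<bar>2 * sin (\<theta> / 2)\<bar>) ^ (n - 1))"

definition hypergeom :: "complex list \<Rightarrow> complex list \<Rightarrow> complex \<Rightarrow> complex" where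
  "hypergeom as bs z =
     (\<Sum>k. (\<Prod>a\<leftarrow>as. pochhammer a k) / (\<Prod>b\<leftarrow>bs. pochhammer b k) * z ^ k / fact k)"

end

theory Submission
  imports Defs "HOL-Probability.Distributions"
begin

text \<open>Substituting \<open>\<theta> = 2 arcsin (exp t / 2)\<close>, so that \<open>2 sin (\<theta>/2) = exp t\<close>, turns
  \<open>(-1)^(n+1) Ls (n+1) (\<pi>/3)\<close> into the integral over \<open>t < 0\<close> of
  \<open>(-t)^n exp t / sqrt (1 - exp (2t) / 4)\<close>. Expanding the square root by the binomial series
  \<open>1 / sqrt (1 - y) = \<Sum>k. binom(2k,k) (y/4)^k\<close> and integrating termwise, using that
  \<open>(-t)^n exp ((2k+1) t)\<close> integrates to \<open>n! / (2k+1)^(n+1)\<close> over \<open>t < 0\<close>, gives the series.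
  The hypergeometric forms follow from \<open>(1/2)\<^sub>k / k! = binom(2k,k) / 4^k\<close> and
  \<open>a (a+1)\<^sub>k = (a+k) (a)\<^sub>k\<close>; the generating function from summing the geometric series in
  \<open>-s/(2k+1)\<close> under the \<open>k\<close>-sum, which Tannery's theorem justifies.\<close>

section \<open>Central binomial coefficients\<close>

lemma pochhammer_half_div_fact:
  "pochhammer (1/2 :: 'a::field_char_0) k / fact k = of_nat ((2*k) choose k) / 4^k"
proof -
  have "(of_nat ((2*k) choose k) :: 'a) = fact (2*k) / (fact k * fact k)"
    by (simp add: binomial_fact)
  also have "\<dots> = 4^k * pochhammer (1/2) k / fact k"
    by (simp add: fact_double power_mult)
  finally show ?thesis by (simp add: field_simps)
qed

lemma central_binomial_sums:
  fixes y :: real assumes "\<bar>y\<bar> < 1"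
  shows "(\<lambda>k. real ((2*k) choose k) / 4^k * y^k) sums (1 / sqrt (1 - y))"
proof -
  have "(\<lambda>k. ((-1/2) gchoose k) * (-y)^k) sums ((1 + - y) powr (-1/2))"
    by (rule gen_binomial_real) (use assms in auto)
  moreover have "((-1/2) gchoose k) * (-y)^k = real ((2*k) choose k) / 4^k * y^k" for k
  proof -
    have "((-1/2::real) gchoose k) * (-y)^k = ((-1)^k * (-1)^k) * (pochhammer (1/2) k / fact k) * y^k"
      by (simp add: gbinomial_pochhammer power_minus[of y])
    then show ?thesis
      by (simp add: pochhammer_half_div_fact flip: power_mult_distrib)
  qed
  moreover have "(1 + - y) powr (-1/2) = 1 / sqrt (1 - y)"
    using assms by (simp add: powr_minus_divide powr_half_sqrt)
  ultimately show ?thesis by simp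
qed

definition central_coeff :: "nat \<Rightarrow> real" where
  "central_coeff k = real ((2*k) choose k) / 16^k"

lemma central_coeff_nonneg: "central_coeff k \<ge> 0"
  by (simp add: central_coeff_def)

lemma central_coeff_le: "central_coeff k \<le> (1/4)^k"
proof -
  have "real ((2*k) choose k) \<le> 4^k"
    using binomial_le_pow2[of "2*k" k] by (simp add: power_mult flip: of_nat_le_iff)
  moreover have "(16::real)^k = 4^k * 4^k" by (simp flip: power_mult_distrib)
  ultimately show ?thesis by (simp add: central_coeff_def divide_le_eq power_divide)
qed

lemma central_coeff_eq_powr: "2 powr (- 4 * real k) * real ((2*k) choose k) = central_coeff k"
proof -
  have "(2::real) powr (4 * real k) = 16^k"
    using powr_realpow[of 2 "4*k"] by (simp add: power_mult)
  then show ?thesis by (simp add: central_coeff_def powr_minus_divide)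
qed

lemma central_coeff_eq_pochhammer:
  "complex_of_real (central_coeff k) = pochhammer (1/2) k / fact k * (1/4)^k"
  by (simp add: central_coeff_def pochhammer_half_div_fact power_divide flip: power_mult_distrib)

lemma summable_central_coeff: "summable central_coeff"
  by (rule summable_comparison_test'[OF summable_geometric[of "1/4"]])
     (simp_all add: central_coeff_le central_coeff_nonneg)

lemma summable_div_ge_one:
  fixes c r :: "nat \<Rightarrow> real"
  assumes "summable c" "\<And>k. c k \<ge> 0" "\<And>k. r k \<ge> 1"
  shows "summable (\<lambda>k. c k / r k)"
proof (rule summable_comparison_test'[OF assms(1)])
  show "norm (c k / r k) \<le> c k" for k
  proof -
    have "c k / r k \<le> c k / 1"
      using assms(2,3)[of k] by (intro divide_left_mono) auto
    then show ?thesis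
      using assms(2,3)[of k] by simp
  qed
qed

definition ls_series :: "nat \<Rightarrow> real" where
  "ls_series n = (\<Sum>k. central_coeff k / (2 * real k + 1) ^ (n+1))"

lemma summable_ls_series_terms: "summable (\<lambda>k. central_coeff k / (2 * real k + 1) ^ n)"
  by (rule summable_div_ge_one[OF summable_central_coeff central_coeff_nonneg]) (simp add: one_le_power)

lemma ls_series_nonneg: "ls_series n \<ge> 0"
  unfolding ls_series_def
  by (intro suminf_nonneg summable_ls_series_terms) (simp add: central_coeff_nonneg)

lemma ls_series_sums:
  "(\<lambda>k. 2 powr (- 4 * real k) / (2 * real k + 1) ^ (n + 1) * real ((2 * k) choose k)) sums ls_series n"
proof -
  have "2 powr (- 4 * real k) / (2 * real k + 1) ^ (n + 1) * real ((2 * k) choose k)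
        = central_coeff k / (2 * real k + 1) ^ (n + 1)" for k
    unfolding central_coeff_eq_powr[symmetric] by simp
  then show ?thesis
    unfolding ls_series_def using summable_sums[OF summable_ls_series_terms[of "n + 1"]] by simp
qed

section \<open>The integral representation\<close>

lemma nn_integral_power_exp_Iio:
  fixes c :: real assumes c: "c > 0"
  shows "(\<integral>\<^sup>+t. ennreal ((-t)^n * exp (c*t)) * indicator {..<0} t \<partial>lborel) = ennreal (fact n / c^(n+1))"
proof -
  let ?F = "\<lambda>t. ennreal ((-t)^n * exp (c*t)) * indicator {..<0} t"
  have "(\<integral>\<^sup>+t. ?F t \<partial>lborel) = ennreal (1/c) * (\<integral>\<^sup>+x. ?F (- x / c) \<partial>lborel)"
    using nn_integral_real_affine[of ?F "-1/c" 0] c by simp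
  also have "(\<integral>\<^sup>+x. ?F (- x / c) \<partial>lborel) =
      (\<integral>\<^sup>+x. ennreal (1/c^n) * (ennreal (x^n * exp (-x)) * indicator {0..} x) \<partial>lborel)"
  proof (rule nn_integral_cong_AE)
    show "AE x in lborel. ?F (- x / c) = ennreal (1/c^n) * (ennreal (x^n * exp (-x)) * indicator {0..} x)"
      using AE_lborel_singleton[of 0]
    proof eventually_elim
      case (elim x)
      show ?case
      proof (cases "x > 0")
        case True
        have "(- (- x / c)) ^ n * exp (c * (- x / c)) = 1 / c^n * (x^n * exp (-x))"
          using c by (simp add: power_divide)
        moreover have "- x / c < 0"
          using True c by (intro divide_neg_pos) auto
        ultimately show ?thesis
          using True c by (simp add: ennreal_mult[symmetric])
      next
        case False
        then have "\<not> - x / c < 0"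
          using c by (simp add: not_less divide_nonpos_pos)
        then show ?thesis
          using False elim by simp
      qed
    qed
  qed
  also have "\<dots> = ennreal (1/c^n) * (\<integral>\<^sup>+x. ennreal (x^n * exp (-x)) * indicator {0..} x \<partial>lborel)"
    by (rule nn_integral_cmult) auto
  also have "\<dots> = ennreal (1/c^n) * ennreal (fact n)"
    by (simp add: nn_intergal_power_times_exp_Ici)
  finally show ?thesis
    using c by (simp add: ennreal_mult[symmetric] field_simps)
qed

lemma exp_half_bounds:
  fixes t :: real assumes "exp t < 2" shows "-1 < exp t / 2" "exp t / 2 < 1"
  using assms exp_gt_zero[of t] by linarith+

definition ls_density :: "real \<Rightarrow> real" where
  "ls_density t = exp t / sqrt (1 - (exp t / 2)^2)"

lemma ls_density_nonneg:
  assumes "t \<le> 0" shows "ls_density t \<ge> 0"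
proof -
  have "exp t \<le> 2" using assms exp_le_one_iff[of t] by linarith
  then show ?thesis by (simp add: ls_density_def power_le_one)
qed

lemma isCont_ls_density:
  assumes "exp t < 2" shows "isCont ls_density t"
proof -
  have "(exp t / 2)^2 < 1"
    using exp_half_bounds[OF assms] by (simp add: abs_square_less_1 abs_less_iff)
  then show ?thesis
    unfolding ls_density_def by (intro continuous_intros) auto
qed

lemma central_coeff_exp_sums:
  assumes "exp t < 2"
  shows "(\<lambda>k. central_coeff k * exp ((2 * real k + 1) * t)) sums ls_density t"
proof -
  have "\<bar>(exp t / 2)^2\<bar> < 1"
    using assms by (simp add: power_less_one_iff)
  then have "(\<lambda>k. exp t * (real ((2*k) choose k) / 4^k * ((exp t / 2)^2)^k)) sums ls_density t"
    unfolding ls_density_def using sums_mult[OF central_binomial_sums] by simp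
  moreover have "exp t * (real ((2*k) choose k) / 4^k * ((exp t / 2)^2)^k)
                 = central_coeff k * exp ((2 * real k + 1) * t)" for k
  proof -
    have "exp ((2 * real k + 1) * t) = exp t ^ (2*k+1)"
      using exp_of_nat_mult[of "2*k+1" t] by (simp add: add.commute)
    moreover have "(16::real)^k = 4^k * 4^k" by (simp flip: power_mult_distrib)
    ultimately show ?thesis
      by (simp add: central_coeff_def power_divide power_mult[symmetric] field_simps)
  qed
  ultimately show ?thesis by simp
qed

lemma ennreal_power_ls_density_eq_suminf:
  assumes "t < 0"
  shows "ennreal ((-t)^n * ls_density t)
         = (\<Sum>k. ennreal (central_coeff k * ((-t)^n * exp ((2 * real k + 1) * t))))"
proof -
  have "exp t < 2"
    using assms exp_less_one_iff[of t] by linarith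
  then have "(\<lambda>k. (-t)^n * (central_coeff k * exp ((2 * real k + 1) * t))) sums ((-t)^n * ls_density t)"
    by (intro sums_mult central_coeff_exp_sums)
  then have sums: "(\<lambda>k. central_coeff k * ((-t)^n * exp ((2 * real k + 1) * t))) sums ((-t)^n * ls_density t)"
    by (simp only: mult.left_commute[of "(-t)^n"])
  have nonneg: "0 \<le> central_coeff k * ((-t)^n * exp ((2 * real k + 1) * t))" for k
    using assms central_coeff_nonneg[of k] by (intro mult_nonneg_nonneg zero_le_power) auto
  have "ennreal ((-t)^n * ls_density t) = ennreal (\<Sum>k. central_coeff k * ((-t)^n * exp ((2 * real k + 1) * t)))"
    by (simp only: sums_unique[OF sums])
  also have "\<dots> = (\<Sum>k. ennreal (central_coeff k * ((-t)^n * exp ((2 * real k + 1) * t))))"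
    by (rule suminf_ennreal2[OF nonneg sums_summable[OF sums], symmetric])
  finally show ?thesis .
qed

lemma nn_integral_ls_density:
  "(\<integral>\<^sup>+t. ennreal ((-t)^n * ls_density t) * indicator {..<0} t \<partial>lborel) = ennreal (fact n * ls_series n)"
proof -
  let ?f = "\<lambda>k t. ennreal (central_coeff k * ((-t)^n * exp ((2 * real k + 1) * t))) * indicator {..<0} t"
  have "(\<integral>\<^sup>+t. ennreal ((-t)^n * ls_density t) * indicator {..<0} t \<partial>lborel)
        = (\<integral>\<^sup>+t. (\<Sum>k. ?f k t) \<partial>lborel)"
  proof (rule nn_integral_cong)
    fix t :: real
    show "ennreal ((-t)^n * ls_density t) * indicator {..<0} t = (\<Sum>k. ?f k t)"
      by (cases "t < 0") (simp_all add: ennreal_power_ls_density_eq_suminf)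
  qed
  also have "\<dots> = (\<Sum>k. \<integral>\<^sup>+t. ?f k t \<partial>lborel)"
    by (rule nn_integral_suminf) simp
  also have "\<dots> = (\<Sum>k. ennreal (fact n * (central_coeff k / (2 * real k + 1)^(n+1))))"
  proof (rule suminf_cong)
    fix k
    have "(\<integral>\<^sup>+t. ?f k t \<partial>lborel)
          = ennreal (central_coeff k) * (\<integral>\<^sup>+t. ennreal ((-t)^n * exp ((2 * real k + 1) * t)) * indicator {..<0} t \<partial>lborel)"
      by (subst nn_integral_cmult[symmetric])
         (auto intro!: nn_integral_cong simp: ennreal_mult central_coeff_nonneg split: split_indicator)
    then show "(\<integral>\<^sup>+t. ?f k t \<partial>lborel) = ennreal (fact n * (central_coeff k / (2 * real k + 1)^(n+1)))"
      by (simp add: nn_integral_power_exp_Iio ennreal_mult[symmetric] central_coeff_nonneg)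
  qed
  also have "\<dots> = ennreal (fact n * ls_series n)"
    unfolding ls_series_def
    by (subst suminf_mult[OF summable_ls_series_terms, symmetric])
       (intro suminf_ennreal2 summable_mult summable_ls_series_terms; simp add: central_coeff_nonneg)
  finally show ?thesis .
qed

lemma has_bochner_integral_ls_density:
  "has_bochner_integral lborel (\<lambda>t. (-t)^n * ls_density t * indicator {..<0} t) (fact n * ls_series n)"
proof (rule has_bochner_integral_nn_integral)
  show "(\<lambda>t. (-t)^n * ls_density t * indicator {..<0} t) \<in> borel_measurable lborel"
    unfolding ls_density_def by measurable
  show "AE t in lborel. 0 \<le> (-t)^n * ls_density t * indicator {..<0} t"
    by (auto simp: indicator_def ls_density_nonneg)
  show "0 \<le> fact n * ls_series n"
    by (simp add: ls_series_nonneg)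
  show "(\<integral>\<^sup>+t. ennreal ((-t)^n * ls_density t * indicator {..<0} t) \<partial>lborel) = ennreal (fact n * ls_series n)"
    by (subst nn_integral_ls_density[symmetric]) (auto intro!: nn_integral_cong simp: indicator_def)
qed

definition ls_angle :: "real \<Rightarrow> real" where
  "ls_angle t = 2 * arcsin (exp t / 2)"

lemma two_sin_half_ls_angle:
  assumes "exp t < 2" shows "2 * sin (ls_angle t / 2) = exp t"
  using exp_half_bounds[OF assms] by (simp add: ls_angle_def sin_arcsin)

lemma ls_angle_has_real_derivative:
  assumes "exp t < 2" shows "(ls_angle has_real_derivative ls_density t) (at t)"
proof -
  have "((\<lambda>t. exp t / 2) has_real_derivative exp t / 2) (at t)"
    by (auto intro!: derivative_eq_intros)
  moreover have "(arcsin has_real_derivative inverse (sqrt (1 - (exp t / 2)\<^sup>2))) (at (exp t / 2))"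
    using exp_half_bounds[OF assms] by (rule DERIV_arcsin)
  ultimately have "((\<lambda>t. arcsin (exp t / 2)) has_real_derivative
                    inverse (sqrt (1 - (exp t / 2)\<^sup>2)) * (exp t / 2)) (at t)"
    by (rule DERIV_chain2[rotated])
  then have "(ls_angle has_real_derivative 2 * (inverse (sqrt (1 - (exp t / 2)\<^sup>2)) * (exp t / 2))) (at t)"
    unfolding ls_angle_def[abs_def] by (rule DERIV_cmult)
  then show ?thesis by (simp add: ls_density_def field_simps)
qed

lemma ls_angle_at_bot: "(ls_angle \<longlongrightarrow> 0) at_bot"
proof -
  have "((\<lambda>t::real. exp t / 2) \<longlongrightarrow> 0 / (2::real)) at_bot"
    by (intro tendsto_divide exp_at_bot tendsto_const) auto
  then have "((\<lambda>t. 2 * arcsin (exp t / 2)) \<longlongrightarrow> 2 * arcsin (0 / 2)) at_bot"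
    by (intro tendsto_mult_left isCont_tendsto_compose[OF isCont_arcsin]) auto
  then show ?thesis by (simp add: ls_angle_def[abs_def])
qed

lemma isCont_ls_angle: "exp t < 2 \<Longrightarrow> isCont ls_angle t"
  unfolding ls_angle_def[abs_def]
  by (intro continuous_intros isCont_o2[OF _ isCont_arcsin]) (auto dest: exp_half_bounds)

lemma ls_angle_0: "ls_angle 0 = pi / 3"
  by (simp add: ls_angle_def)

lemma interval_integral_neg_log_sine_power:
  "(LBINT \<theta>=0..pi/3. (- ln \<bar>2 * sin (\<theta> / 2)\<bar>) ^ n) = fact n * ls_series n"
proof -
  define f where "f \<theta> = (- ln \<bar>2 * sin (\<theta> / 2)\<bar>) ^ n" for \<theta> :: real
  have exp_less_2: "exp t < 2" if "t < 0" for t :: real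
    using that exp_less_one_iff[of t] by linarith
  have f_ls_angle: "f (ls_angle t) = (-t)^n" if "t < 0" for t
    using two_sin_half_ls_angle[OF exp_less_2[OF that]] by (simp add: f_def)
  have integrand: "indicator (einterval (-\<infinity>) (ereal 0)) t *\<^sub>R (f (ls_angle t) * ls_density t)
                   = (-t)^n * ls_density t * indicator {..<0} t" for t
    by (auto simp: einterval_def indicator_def f_ls_angle)
  have integral:
    "has_bochner_integral lborel
       (\<lambda>t. indicator (einterval (-\<infinity>) (ereal 0)) t *\<^sub>R (f (ls_angle t) * ls_density t))
       (fact n * ls_series n)"
    unfolding integrand by (rule has_bochner_integral_ls_density)
  have "(LBINT \<theta>=ereal 0..ereal (pi/3). f \<theta>) = (LBINT t=-\<infinity>..ereal 0. f (ls_angle t) * ls_density t)"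
  proof (rule interval_integral_substitution_nonneg(2))
    show "((ereal \<circ> ls_angle \<circ> real_of_ereal) \<longlongrightarrow> ereal 0) (at_right (-\<infinity>))"
      using ls_angle_at_bot
      by (simp add: at_right_MInf filterlim_filtermap o_def tendsto_ereal)
    have "(ls_angle \<longlongrightarrow> pi/3) (at 0)"
      using isCont_ls_angle[of 0] ls_angle_0 by (simp add: isCont_def)
    then have "(ls_angle \<longlongrightarrow> pi/3) (at_left 0)"
      by (rule tendsto_mono[OF at_le, rotated]) simp
    then show "((ereal \<circ> ls_angle \<circ> real_of_ereal) \<longlongrightarrow> ereal (pi/3)) (at_left (ereal 0))"
      by (simp add: at_left_ereal filterlim_filtermap o_def tendsto_ereal)
    show "set_integrable lborel (einterval (-\<infinity>) (ereal 0)) (\<lambda>t. f (ls_angle t) * ls_density t)"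
      unfolding set_integrable_def using integral by (rule integrable.intros)
    show "isCont f (ls_angle t)" if "ereal t < ereal 0" for t
      using that two_sin_half_ls_angle[OF exp_less_2, of t] unfolding f_def
      by (intro continuous_intros) auto
  qed (auto simp: exp_less_2 f_ls_angle ls_density_nonneg
             intro!: ls_angle_has_real_derivative isCont_ls_density)
  also have "\<dots> = fact n * ls_series n"
    using has_bochner_integral_integral_eq[OF integral]
    by (simp add: interval_lebesgue_integral_def set_lebesgue_integral_def)
  finally show ?thesis
    by (simp add: f_def zero_ereal_def)
qed

lemma Ls_pi_div_3: "Ls (n + 1) (pi / 3) = (-1)^(n+1) * fact n * ls_series n"
proof -
  have "(ln \<bar>2 * sin (\<theta> / 2)\<bar>) ^ (n + 1 - 1) = (-1)^n * (- ln \<bar>2 * sin (\<theta> / 2)\<bar>) ^ n"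
    for \<theta> :: real by (simp flip: power_mult_distrib)
  then show ?thesis
    by (simp add: Ls_def interval_integral_neg_log_sine_power)
qed

lemma Ls_pi_div_3_normalized: "(-1) ^ (n + 1) / fact n * Ls (n + 1) (pi / 3) = ls_series n"
  unfolding Ls_pi_div_3 by (simp flip: power_mult_distrib)

section \<open>Hypergeometric forms\<close>

lemma pochhammer_plus_one:
  "a * pochhammer (a + 1) k = (a + of_nat k) * pochhammer a k"
  for a :: "'a::comm_semiring_1"
  using pochhammer_rec[of a k] pochhammer_rec'[of a k] by simp

lemma hypergeom_half_three_halves:
  "hypergeom (replicate (n + 2) (1/2)) (replicate (n + 1) (3/2)) (1/4) = complex_of_real (ls_series n)"
proof -
  have summand: "(\<Prod>a\<leftarrow>replicate (n + 2) (1/2). pochhammer a k) /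
      (\<Prod>b\<leftarrow>replicate (n + 1) (3/2). pochhammer b k) * (1/4) ^ k / fact k
      = complex_of_real (central_coeff k / (2 * real k + 1) ^ (n+1))" for k
  proof -
    let ?p = "pochhammer (1/2::complex) k"
    have "?p / fact k \<noteq> 0"
      by (simp add: pochhammer_half_div_fact)
    then have p: "?p \<noteq> 0" by auto
    have "pochhammer (3/2::complex) k = (2 * of_nat k + 1) * ?p"
      using pochhammer_plus_one[of "1/2::complex" k] by (simp add: field_simps)
    then have "(\<Prod>a\<leftarrow>replicate (n + 2) (1/2). pochhammer a k) /
               (\<Prod>b\<leftarrow>replicate (n + 1) (3/2). pochhammer b k)
             = (?p * ?p ^ (n+1)) / ((2 * of_nat k + 1) ^ (n+1) * ?p ^ (n+1))"
      by (simp add: prod_list_replicate power_mult_distrib)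
    also have "\<dots> = ?p / (2 * of_nat k + 1) ^ (n+1)"
      using p by simp
    finally show ?thesis
      by (simp add: central_coeff_eq_pochhammer)
  qed
  show ?thesis
    unfolding hypergeom_def summand ls_series_def
    by (rule suminf_of_real[OF summable_ls_series_terms, symmetric])
qed

lemma norm_odd_plus_ge:
  fixes s :: complex shows "1 + Re s \<le> norm (2 * of_nat k + 1 + s)"
  using complex_Re_le_cmod[of "2 * of_nat k + 1 + s"] by simp

lemma summable_central_coeff_div_complex:
  fixes s :: complex assumes "Re s > -1"
  shows "summable (\<lambda>k. complex_of_real (central_coeff k) / (2 * of_nat k + 1 + s))"
proof (rule summable_comparison_test')
  show "summable (\<lambda>k. (1/4::real)^k / (1 + Re s))"
    by (intro summable_divide summable_geometric) simp
  show "norm (complex_of_real (central_coeff k) / (2 * of_nat k + 1 + s)) \<le> (1/4)^k / (1 + Re s)" for k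
    using assms norm_odd_plus_ge[of s k] central_coeff_le[of k] central_coeff_nonneg[of k]
    by (simp add: norm_divide frac_le)
qed

lemma hypergeom_2F1_half:
  fixes s :: complex assumes "Re s > -1"
  shows "hypergeom [1/2, s/2 + 1/2] [s/2 + 3/2] (1/4)
         = (s + 1) * (\<Sum>k. complex_of_real (central_coeff k) / (2 * of_nat k + 1 + s))"
proof -
  define a where "a = (s + 1) / 2"
  have "Re a > 0" using assms by (simp add: a_def)
  then have nonzero: "a + of_nat k \<noteq> 0" "pochhammer (a + 1) k \<noteq> 0" for k
    by (auto simp: pochhammer_eq_0_iff dest!: arg_cong[where f = Re])
  have half_cancel: "(x / 2) / (y / 2) = x / y" for x y :: complex
    by simp
  have summand:
    "pochhammer (1/2) k * pochhammer (s/2 + 1/2) k / pochhammer (s/2 + 3/2) k * (1/4) ^ k / fact k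
     = (s + 1) * (complex_of_real (central_coeff k) / (2 * of_nat k + 1 + s))" for k
  proof -
    have "pochhammer a k / pochhammer (a + 1) k = a / (a + of_nat k)"
      using pochhammer_plus_one[of a k] nonzero[of k] by (simp add: field_simps)
    also have "\<dots> = ((s + 1) / 2) / ((2 * of_nat k + 1 + s) / 2)"
      by (simp add: a_def add_divide_distrib add_ac)
    also have "\<dots> = (s + 1) / (2 * of_nat k + 1 + s)"
      by (rule half_cancel)
    finally have ratio: "pochhammer a k / pochhammer (a + 1) k = (s + 1) / (2 * of_nat k + 1 + s)" .
    have params: "s/2 + 1/2 = a" "s/2 + 3/2 = a + 1"
      by (simp_all add: a_def field_simps)
    have "pochhammer (1/2) k * pochhammer (s/2 + 1/2) k / pochhammer (s/2 + 3/2) k * (1/4) ^ k / fact k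
          = (pochhammer (1/2) k / fact k * (1/4)^k) * (pochhammer a k / pochhammer (a + 1) k)"
      unfolding params by (simp only: divide_inverse mult_ac)
    also have "\<dots> = (s + 1) * (complex_of_real (central_coeff k) / (2 * of_nat k + 1 + s))"
      unfolding ratio central_coeff_eq_pochhammer by (simp only: divide_inverse mult_ac)
    finally show ?thesis .
  qed
  have "hypergeom [1/2, s/2 + 1/2] [s/2 + 3/2] (1/4)
        = (\<Sum>k. (s + 1) * (complex_of_real (central_coeff k) / (2 * of_nat k + 1 + s)))"
    unfolding hypergeom_def by (simp only: list.map prod_list.Cons prod_list.Nil mult_1_right summand)
  also have "\<dots> = (s + 1) * (\<Sum>k. complex_of_real (central_coeff k) / (2 * of_nat k + 1 + s))"
    by (rule suminf_mult[OF summable_central_coeff_div_complex[OF assms]])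
  finally show ?thesis .
qed

section \<open>The generating function\<close>

lemma geometric_sums_over_powers:
  fixes r :: real and z :: complex assumes "r \<ge> 1" "norm z < 1"
  shows "(\<lambda>n. z^n / of_real r ^ (n+1)) sums (1 / (of_real r - z))"
proof -
  have "norm (z / of_real r) < 1"
    using assms by (simp add: norm_divide divide_less_eq)
  then have "(\<lambda>n. (1 / of_real r) * (z / of_real r)^n) sums ((1 / of_real r) * (1 / (1 - z / of_real r)))"
    by (intro sums_mult geometric_sums)
  moreover have "of_real r - z \<noteq> 0"
    using assms norm_triangle_ineq2[of "of_real r" z] by auto
  ultimately show ?thesis
    using assms by (simp add: power_divide field_simps)
qed

lemma norm_sum_geometric_over_powers_le:
  fixes r :: real and z :: complex assumes "r \<ge> 1" "norm z < 1"
  shows "norm (\<Sum>n<N. z^n / of_real r ^ (n+1)) \<le> 1 / (1 - norm z)"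
proof -
  have "norm (z^n / of_real r ^ (n+1)) \<le> norm z ^ n" for n
  proof -
    have "1 \<le> r ^ (n+1)"
      using assms(1) by (rule one_le_power)
    then have "norm z ^ n / r ^ (n+1) \<le> norm z ^ n / 1"
      by (intro divide_left_mono) auto
    moreover have "norm (z^n / of_real r ^ (n+1)) = norm z ^ n / r ^ (n+1)"
      using assms(1) by (simp only: norm_divide norm_power norm_of_real abs_of_nonneg[of r])
    ultimately show ?thesis
      by simp
  qed
  then have "norm (\<Sum>n<N. z^n / of_real r ^ (n+1)) \<le> (\<Sum>n<N. norm z ^ n)"
    by (intro sum_norm_le)
  also have "\<dots> \<le> (\<Sum>n. norm z ^ n)"
    using assms(2) by (intro sum_le_suminf summable_geometric) auto
  also have "\<dots> = 1 / (1 - norm z)"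
    using assms(2) by (intro suminf_geometric) simp
  finally show ?thesis .
qed

lemma sums_swap_geometric:
  fixes c r :: "nat \<Rightarrow> real" and z :: complex
  assumes c: "summable c" "\<And>k. c k \<ge> 0" and r: "\<And>k. r k \<ge> 1" and z: "norm z < 1"
  shows "(\<lambda>n. complex_of_real (\<Sum>k. c k / r k ^ (n+1)) * z^n)
           sums (\<Sum>k. complex_of_real (c k) / (of_real (r k) - z))"
proof -
  define F where "F k n = complex_of_real (c k) * (z^n / of_real (r k) ^ (n+1))" for k n
  have F_eq: "F k n = complex_of_real (c k / r k ^ (n+1)) * z^n" for k n
    by (simp add: F_def)
  have summable_c_div: "summable (\<lambda>k. c k / r k ^ m)" for m
    using r by (intro summable_div_ge_one c) (simp add: one_le_power)
  have inner: "complex_of_real (\<Sum>k. c k / r k ^ (n+1)) * z^n = (\<Sum>k. F k n)" for n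
    unfolding F_eq suminf_of_real[OF summable_c_div]
    by (rule suminf_mult2) (rule summable_of_real[OF summable_c_div])
  have swap: "(\<Sum>n<N. \<Sum>k. F k n) = (\<Sum>k. \<Sum>n<N. F k n)" for N
    unfolding F_eq
    by (intro suminf_sum[symmetric] summable_mult2 summable_of_real summable_c_div)
  have "((\<lambda>N. \<Sum>k. \<Sum>n<N. F k n) \<longlongrightarrow> (\<Sum>k. complex_of_real (c k) / (of_real (r k) - z))) sequentially"
  proof (rule tannerys_theorem[where M = "\<lambda>k. c k / (1 - norm z)", THEN conjunct2, THEN conjunct2])
    show "(\<lambda>N. \<Sum>n<N. F k n) \<longlonglongrightarrow> complex_of_real (c k) / (of_real (r k) - z)" for k
      using sums_mult[OF geometric_sums_over_powers[OF r z], of "complex_of_real (c k)"]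
      by (simp add: F_def sums_def)
    have "norm (\<Sum>n<N. F k n) \<le> c k / (1 - norm z)" for k N
    proof -
      have "(\<Sum>n<N. F k n) = complex_of_real (c k) * (\<Sum>n<N. z^n / of_real (r k) ^ (n+1))"
        by (simp only: F_def sum_distrib_left)
      then have "norm (\<Sum>n<N. F k n) = c k * norm (\<Sum>n<N. z^n / of_real (r k) ^ (n+1))"
        by (simp only: norm_mult norm_of_real abs_of_nonneg[OF c(2)])
      also have "\<dots> \<le> c k * (1 / (1 - norm z))"
        using c(2)[of k] by (intro mult_left_mono norm_sum_geometric_over_powers_le r z)
      finally show ?thesis by simp
    qed
    then show "\<forall>\<^sub>F (k, N) in at_top \<times>\<^sub>F sequentially. norm (\<Sum>n<N. F k n) \<le> c k / (1 - norm z)"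
      by (simp add: always_eventually case_prod_beta)
    show "summable (\<lambda>k. c k / (1 - norm z))"
      using c(1) by (rule summable_divide)
  qed simp
  then show ?thesis
    unfolding sums_def inner swap .
qed

lemma Ls_pi_div_3_generating_function:
  fixes s :: complex assumes "norm s < 1"
  shows "(\<lambda>n. - (complex_of_real (Ls (n + 1) (pi / 3)) * s ^ n / fact n))
           sums (\<Sum>k. complex_of_real (central_coeff k) / (2 * of_nat k + 1 + s))"
proof -
  have "(\<lambda>n. complex_of_real (ls_series n) * (-s)^n)
          sums (\<Sum>k. complex_of_real (central_coeff k) / (of_real (2 * real k + 1) - (-s)))"
    unfolding ls_series_def
    using assms
    by (intro sums_swap_geometric[of central_coeff "\<lambda>k. 2 * real k + 1" "-s"])
       (simp_all add: summable_central_coeff central_coeff_nonneg)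
  moreover have "- (complex_of_real (Ls (n + 1) (pi / 3)) * s ^ n / fact n)
                 = complex_of_real (ls_series n) * (-s)^n" for n
    unfolding Ls_pi_div_3 power_minus[of s] by simp
  ultimately show ?thesis by (simp add: add_ac)
qed

theorem theorem2p11:
  shows "(\<forall>n::nat.
            complex_of_real ((-1) ^ (n + 1) / fact n * Ls (n + 1) (pi / 3))
              = hypergeom (replicate (n + 2) (1/2)) (replicate (n + 1) (3/2)) (1/4)
          \<and> (\<lambda>k. 2 powr (- 4 * real k) / (2 * real k + 1) ^ (n + 1) * real ((2 * k) choose k))
              sums ((-1) ^ (n + 1) / fact n * Ls (n + 1) (pi / 3)))
       \<and> (\<forall>s::complex. norm s < 1 \<longrightarrow>
            (\<lambda>n. - (complex_of_real (Ls (n + 1) (pi / 3)) * s ^ n / fact n))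
              sums (1 / (s + 1) * hypergeom [1/2, s/2 + 1/2] [s/2 + 3/2] (1/4))
          \<and> (\<lambda>k. complex_of_real (2 powr (- 4 * real k) * real ((2 * k) choose k)) / (2 * of_nat k + 1 + s))
              sums (1 / (s + 1) * hypergeom [1/2, s/2 + 1/2] [s/2 + 3/2] (1/4)))"
proof (intro conjI allI impI)
  fix n :: nat
  show "complex_of_real ((-1) ^ (n + 1) / fact n * Ls (n + 1) (pi / 3))
          = hypergeom (replicate (n + 2) (1/2)) (replicate (n + 1) (3/2)) (1/4)"
    unfolding Ls_pi_div_3_normalized hypergeom_half_three_halves ..
  show "(\<lambda>k. 2 powr (- 4 * real k) / (2 * real k + 1) ^ (n + 1) * real ((2 * k) choose k))
          sums ((-1) ^ (n + 1) / fact n * Ls (n + 1) (pi / 3))"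
    unfolding Ls_pi_div_3_normalized by (rule ls_series_sums)
next
  fix s :: complex
  assume s: "norm s < 1"
  then have Re_s: "Re s > -1"
    using abs_Re_le_cmod[of s] by (auto simp: abs_le_iff)
  then have "s + 1 \<noteq> 0"
    by (auto dest: arg_cong[where f = Re])
  with Re_s have hyp: "1 / (s + 1) * hypergeom [1/2, s/2 + 1/2] [s/2 + 3/2] (1/4)
                       = (\<Sum>k. complex_of_real (central_coeff k) / (2 * of_nat k + 1 + s))"
    by (simp add: hypergeom_2F1_half)
  show "(\<lambda>n. - (complex_of_real (Ls (n + 1) (pi / 3)) * s ^ n / fact n))
          sums (1 / (s + 1) * hypergeom [1/2, s/2 + 1/2] [s/2 + 3/2] (1/4))"
    unfolding hyp using s by (rule Ls_pi_div_3_generating_function)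
  show "(\<lambda>k. complex_of_real (2 powr (- 4 * real k) * real ((2 * k) choose k)) / (2 * of_nat k + 1 + s))
          sums (1 / (s + 1) * hypergeom [1/2, s/2 + 1/2] [s/2 + 3/2] (1/4))"
    unfolding hyp central_coeff_eq_powr
    using summable_sums[OF summable_central_coeff_div_complex[OF Re_s]] .
qed

end
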